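(* In the setting described in the context, let $\gamma \in (0,\frac12)$, $\lambda_0 > 1$, $0 \leq k \leq q$, and $x \in \Omega$. Then there exist nonnegative real numbers $a_0,\dots,a_k$ with $\sum_{i=0}^k a_i = 1$ and $d\hat u_k = \sum_{i=0}^k a_i \, du_i$ at $x$. Moreover, $a_i = 0$ for every $0 \leq i \leq k$ satisfying $u_i(x) < \hat u_k(x) - 2k\lambda_i^{-1}$.
   Context: $n\ge 3$, $u_0,\dots,u_q$ are non-constant linear (affine) functions on $\mathbb{R}^n$, and $\Omega=\bigcap_{m=0}^q\{u_m\le 0\}$ is a compact convex polytope with non-empty interior. Fix a smooth even function $\eta:\mathbb{R}\to\mathbb{R}$ with $\eta(t)=|t|$ for $|t|\ge \frac12$ and $\eta''\ge 0$ everywhere. For $\gamma\in(0,\frac12)$ and $\lambda_0>1$ set $\lambda_k=\gamma^{-k}\lambda_0$ for $1\le k\le q$. Define $\hat u_0=u_0$ and, for $1\le k\le q$, $\hat u_k=\frac12\big(\hat u_{k-1}+u_k+\lambda_k^{-1}\eta(\lambda_k(\hat u_{k-1}-u_k))\big)$. *)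

theory Defs
  imports "HOL-Analysis.Analysis"
begin

definition smooth_fun :: "(real \<Rightarrow> real) \<Rightarrow> bool" where
  "smooth_fun f \<longleftrightarrow> (\<forall>m t. ((deriv ^^ m) f) differentiable (at t))"

definition lam :: "real \<Rightarrow> real \<Rightarrow> nat \<Rightarrow> real" where
  "lam \<gamma> l0 k = l0 / \<gamma> ^ k"

fun uhat :: "(nat \<Rightarrow> 'a \<Rightarrow> real) \<Rightarrow> (real \<Rightarrow> real) \<Rightarrow> real \<Rightarrow> real \<Rightarrow> nat \<Rightarrow> 'a \<Rightarrow> real" where
  "uhat u \<eta> \<gamma> l0 0 x = u 0 x"
| "uhat u \<eta> \<gamma> l0 (Suc k) x =
     (uhat u \<eta> \<gamma> l0 k x + u (Suc k) x
      + \<eta> (lam \<gamma> l0 (Suc k) * (uhat u \<eta> \<gamma> l0 k x - u (Suc k) x)) / lam \<gamma> l0 (Suc k)) / 2"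

end

theory Submission
  imports Defs
begin

text \<open>
  Each step of the recursion is a smoothed maximum
  \<open>smax \<eta> L v w = (v + w + \<eta> (L * (v - w)) / L) / 2\<close>. By the chain rule its gradient is
  \<open>(1 + s) / 2 * dv + (1 - s) / 2 * dw\<close> with \<open>s = \<eta>' (L * (v - w)) \<in> [-1, 1]\<close>, so by
  induction the gradient of \<open>uhat k\<close> is a convex combination of the \<open>du i\<close>.
  Since \<open>\<eta> t \<le> \<bar>t\<bar> + 1\<close>, the smoothed maximum exceeds \<open>max v w\<close> by at most \<open>1 / (2 * L)\<close>;
  so if one argument lies more than \<open>1 / L\<close> below it, then \<open>\<bar>L * (v - w)\<bar> > 1/2\<close>,
  \<open>s = \<plusminus>1\<close>, and that argument receives weight 0. If \<open>u i\<close> lies \<open>2 (k + 1) / lam i\<close>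
  below \<open>uhat (k + 1)\<close> but still carries weight in \<open>uhat k\<close>, i.e. \<open>u i \<ge> uhat k - 2 k / lam i\<close>,
  then \<open>uhat k\<close> itself lies \<open>2 / lam i \<ge> 1 / lam (k + 1)\<close> below \<open>uhat (k + 1)\<close>, so the
  weights inherited from \<open>uhat k\<close> all vanish.
\<close>

lemma smooth_fun_deriv: "smooth_fun f \<Longrightarrow> smooth_fun (deriv f)"
  unfolding smooth_fun_def by (metis funpow_Suc_right o_apply)

lemma smooth_fun_has_real_derivative:
  "smooth_fun f \<Longrightarrow> (f has_real_derivative deriv f t) (at t)"
  unfolding smooth_fun_def by (metis DERIV_deriv_iff_real_differentiable funpow_0)

locale smoothed_abs =
  fixes \<eta> :: "real \<Rightarrow> real"
  assumes has_deriv: "(\<eta> has_real_derivative deriv \<eta> t) (at t)"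
    and abs_deriv_le_1: "\<bar>deriv \<eta> t\<bar> \<le> 1"
    and deriv_eq_1: "t > 1/2 \<Longrightarrow> deriv \<eta> t = 1"
    and deriv_eq_minus_1: "t < -1/2 \<Longrightarrow> deriv \<eta> t = -1"
    and value_at_half: "\<eta> (1/2) = 1/2"

lemma smoothed_absI:
  fixes \<eta> :: "real \<Rightarrow> real"
  assumes smooth: "smooth_fun \<eta>"
    and eq_abs: "\<And>t. \<bar>t\<bar> \<ge> 1/2 \<Longrightarrow> \<eta> t = \<bar>t\<bar>"
    and convex: "\<And>t. (deriv ^^ 2) \<eta> t \<ge> 0"
  shows "smoothed_abs \<eta>"
proof
  show D: "(\<eta> has_real_derivative deriv \<eta> t) (at t)" for t
    using smooth by (rule smooth_fun_has_real_derivative)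
  have mono: "deriv \<eta> s \<le> deriv \<eta> t" if "s \<le> t" for s t
  proof (rule deriv_nonneg_imp_mono[OF _ _ that])
    show "(deriv \<eta> has_real_derivative deriv (deriv \<eta>) r) (at r)" for r
      using smooth_fun_deriv[OF smooth] by (rule smooth_fun_has_real_derivative)
    show "deriv (deriv \<eta>) r \<ge> 0" for r
      using convex[of r] by (simp add: numeral_2_eq_2)
  qed
  show right: "deriv \<eta> t = 1" if "t > 1/2" for t
  proof -
    have "(\<eta> has_real_derivative 1) (at t)"
      by (rule has_field_derivative_transform_within_open[OF DERIV_ident, where S="{1/2<..}"])
        (use that eq_abs in auto)
    then show ?thesis using D DERIV_unique by blast
  qed
  show left: "deriv \<eta> t = -1" if "t < -1/2" for t
  proof -
    have "(\<eta> has_real_derivative -1) (at t)"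
      by (rule has_field_derivative_transform_within_open[OF DERIV_minus[OF DERIV_ident],
            where S="{..< -1/2}"])
        (use that eq_abs in auto)
    then show ?thesis using D DERIV_unique by blast
  qed
  show "\<bar>deriv \<eta> t\<bar> \<le> 1" for t
    using mono[of t "max t 1"] mono[of "min t (-1)" t] right[of "max t 1"] left[of "min t (-1)"]
    by auto
  show "\<eta> (1/2) = 1/2"
    using eq_abs by simp
qed

text \<open>For \<open>\<eta> = abs\<close> this is \<open>max v w\<close>.\<close>
definition smax :: "(real \<Rightarrow> real) \<Rightarrow> real \<Rightarrow> real \<Rightarrow> real \<Rightarrow> real" where
  "smax \<eta> L v w = (v + w + \<eta> (L * (v - w)) / L) / 2"

definition smax_weights :: "real \<Rightarrow> nat \<Rightarrow> (nat \<Rightarrow> real) \<Rightarrow> nat \<Rightarrow> real" where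
  "smax_weights s k a i = (if i \<le> k then (1 + s) / 2 * a i else (1 - s) / 2)"

lemma smax_weights_nonneg:
  "\<bar>s\<bar> \<le> 1 \<Longrightarrow> \<forall>i\<le>k. 0 \<le> a i \<Longrightarrow> \<forall>i\<le>Suc k. 0 \<le> smax_weights s k a i"
  by (auto simp: smax_weights_def)

lemma sum_smax_weights:
  assumes "(\<Sum>i\<le>k. a i) = 1"
  shows "(\<Sum>i\<le>Suc k. smax_weights s k a i) = 1"
proof -
  have "(\<Sum>i\<le>Suc k. smax_weights s k a i) = (1 + s) / 2 * (\<Sum>i\<le>k. a i) + (1 - s) / 2"
    by (simp add: smax_weights_def sum_distrib_left)
  then show ?thesis
    using assms by (simp add: field_simps)
qed

lemma sum_smax_weights_mult:
  "(\<Sum>i\<le>Suc k. smax_weights s k a i * D i h)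
     = (1 + s) / 2 * (\<Sum>i\<le>k. a i * D i h) + (1 - s) / 2 * D (Suc k) h"
  by (simp add: smax_weights_def sum_distrib_left mult.assoc)

lemma uhat_Suc_smax:
  "uhat u \<eta> \<gamma> l0 (Suc k) = (\<lambda>x. smax \<eta> (lam \<gamma> l0 (Suc k)) (uhat u \<eta> \<gamma> l0 k x) (u (Suc k) x))"
  unfolding smax_def by (rule ext) (simp only: uhat.simps)

lemma lam_pos: "0 < \<gamma> \<Longrightarrow> 0 < l0 \<Longrightarrow> 0 < lam \<gamma> l0 k"
  by (simp add: lam_def)

lemma lam_mono:
  assumes "0 < \<gamma>" "\<gamma> \<le> 1" "0 < l0" "i \<le> j"
  shows "lam \<gamma> l0 i \<le> lam \<gamma> l0 j"
  unfolding lam_def using assms by (intro divide_left_mono power_decreasing mult_pos_pos) auto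

lemma below_threshold_Suc:
  fixes L Li :: real
  assumes "0 < Li" "Li \<le> L" "v - 2 * real k / Li \<le> t" "t < U - 2 * real (Suc k) / Li"
  shows "v < U - 1 / L"
proof -
  have "1 / L \<le> 2 / Li"
    using assms(1,2) by (simp add: frac_le)
  moreover have "2 * real (Suc k) / Li = 2 * real k / Li + 2 / Li"
    by (simp add: add_divide_distrib)
  ultimately show ?thesis
    using assms(3,4) by linarith
qed

context smoothed_abs
begin

lemma lipschitz_1: "\<bar>\<eta> s - \<eta> t\<bar> \<le> \<bar>s - t\<bar>"
  using field_differentiable_bound[of UNIV \<eta> "deriv \<eta>" 1 s t] has_deriv abs_deriv_le_1
  by auto

lemma le_abs_plus_1: "\<eta> t \<le> \<bar>t\<bar> + 1"
  using lipschitz_1[of t "1/2"] value_at_half by linarith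

lemma smax_le_max:
  assumes "0 < L"
  shows "smax \<eta> L v w \<le> max v w + 1 / (2 * L)"
proof -
  define e where "e = \<eta> (L * (v - w)) / L"
  define t where "t = 1 / L"
  have "(\<bar>v - w\<bar> + t) * L = \<bar>L * (v - w)\<bar> + 1"
    using assms by (simp add: t_def abs_mult distrib_right)
  then have "\<eta> (L * (v - w)) \<le> (\<bar>v - w\<bar> + t) * L"
    using le_abs_plus_1 by simp
  then have "e \<le> \<bar>v - w\<bar> + t"
    using assms by (simp add: e_def pos_divide_le_eq)
  moreover have "v + w + \<bar>v - w\<bar> = 2 * max v w"
    by (cases "v \<le> w") auto
  ultimately have "(v + w + e) / 2 \<le> max v w + t / 2"
    by argo
  then show ?thesis
    by (simp add: smax_def e_def t_def)
qed

lemma deriv_eq_1_if_below_smax: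
  assumes "0 < L" "w < smax \<eta> L v w - 1 / L"
  shows "deriv \<eta> (L * (v - w)) = 1"
proof -
  have "1 / (2 * L) < 1 / L"
    using assms(1) by (simp add: frac_less2)
  then have "v - w > 1 / (2 * L)"
    using smax_le_max[OF assms(1), of v w] assms(2) by (cases "v \<le> w") (simp_all add: max_def)
  then show ?thesis
    using assms(1) by (intro deriv_eq_1) (simp add: field_simps)
qed

lemma deriv_eq_minus_1_if_below_smax:
  assumes "0 < L" "v < smax \<eta> L v w - 1 / L"
  shows "deriv \<eta> (L * (v - w)) = -1"
proof -
  have "1 / (2 * L) < 1 / L"
    using assms(1) by (simp add: frac_less2)
  then have "w - v > 1 / (2 * L)"
    using smax_le_max[OF assms(1), of v w] assms(2) by (cases "v \<le> w") (simp_all add: max_def)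
  then show ?thesis
    using assms(1) by (intro deriv_eq_minus_1) (simp add: field_simps)
qed

lemma has_derivative_smax:
  fixes V W :: "'a::real_normed_vector \<Rightarrow> real"
  assumes "(V has_derivative DV) (at x)" "(W has_derivative DW) (at x)" "L \<noteq> 0"
  defines "s \<equiv> deriv \<eta> (L * (V x - W x))"
  shows "((\<lambda>y. smax \<eta> L (V y) (W y)) has_derivative
           (\<lambda>h. (1 + s) / 2 * DV h + (1 - s) / 2 * DW h)) (at x)"
proof -
  have "((\<lambda>y. L * (V y - W y)) has_derivative (\<lambda>h. L * (DV h - DW h))) (at x)"
    by (intro has_derivative_mult_right has_derivative_diff assms(1,2))
  moreover have "(\<eta> has_derivative (\<lambda>h. s * h)) (at (L * (V x - W x)))"
    using has_deriv unfolding s_def has_field_derivative_def .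
  ultimately have chain: "((\<lambda>y. \<eta> (L * (V y - W y))) has_derivative (\<lambda>h. s * (L * (DV h - DW h)))) (at x)"
    using diff_chain_at by (fastforce simp: o_def)
  have "((\<lambda>y. (V y + W y) * (1/2) + \<eta> (L * (V y - W y)) * (1/L) * (1/2)) has_derivative
          (\<lambda>h. (DV h + DW h) * (1/2) + s * (L * (DV h - DW h)) * (1/L) * (1/2))) (at x)"
    by (intro has_derivative_add has_derivative_mult_left assms(1,2) chain)
  moreover have "(\<lambda>y. (V y + W y) * (1/2) + \<eta> (L * (V y - W y)) * (1/L) * (1/2))
                   = (\<lambda>y. smax \<eta> L (V y) (W y))"
    by (simp add: fun_eq_iff smax_def field_simps)
  moreover have "(\<lambda>h. (DV h + DW h) * (1/2) + s * (L * (DV h - DW h)) * (1/L) * (1/2))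
                   = (\<lambda>h. (1 + s) / 2 * DV h + (1 - s) / 2 * DW h)"
    using assms(3) by (simp add: fun_eq_iff field_simps)
  ultimately show ?thesis by simp
qed

lemma uhat_Suc_weight_eq_0:
  assumes \<gamma>: "0 < \<gamma>" "\<gamma> \<le> 1" and l0: "0 < l0"
    and a_zero: "\<forall>i\<le>k. u i x < uhat u \<eta> \<gamma> l0 k x - 2 * real k / lam \<gamma> l0 i \<longrightarrow> a i = 0"
    and i: "i \<le> Suc k"
    and low: "u i x < uhat u \<eta> \<gamma> l0 (Suc k) x - 2 * real (Suc k) / lam \<gamma> l0 i"
  shows "smax_weights (deriv \<eta> (lam \<gamma> l0 (Suc k) * (uhat u \<eta> \<gamma> l0 k x - u (Suc k) x))) k a i = 0"
proof -
  define V where "V = uhat u \<eta> \<gamma> l0 k x"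
  define L where "L = lam \<gamma> l0 (Suc k)"
  define Li where "Li = lam \<gamma> l0 i"
  have L: "0 < L"
    unfolding L_def using \<gamma>(1) l0 by (rule lam_pos)
  have Li: "0 < Li" "Li \<le> L"
    unfolding Li_def L_def using i \<gamma> l0 by (auto intro: lam_pos lam_mono)
  have low': "u i x < smax \<eta> L V (u (Suc k) x) - 2 * real (Suc k) / Li"
    using low unfolding uhat_Suc_smax V_def L_def Li_def by simp
  consider "i = Suc k" | "i \<le> k" "a i = 0" | "i \<le> k" "a i \<noteq> 0"
    using i le_Suc_eq by blast
  then show ?thesis
  proof cases
    case 1
    have "u i x - 2 * real k / Li \<le> u i x"
      using Li by simp
    then have "u (Suc k) x < smax \<eta> L V (u (Suc k) x) - 1 / L"
      using below_threshold_Suc[OF Li _ low'] 1 by simp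
    then show ?thesis
      using 1 L deriv_eq_1_if_below_smax by (simp add: smax_weights_def V_def L_def)
  next
    case 2
    then show ?thesis by (simp add: smax_weights_def)
  next
    case 3
    then have "V - 2 * real k / Li \<le> u i x"
      using a_zero unfolding V_def Li_def by (meson not_le)
    then have "V < smax \<eta> L V (u (Suc k) x) - 1 / L"
      using below_threshold_Suc[OF Li _ low'] by simp
    then show ?thesis
      using 3 L deriv_eq_minus_1_if_below_smax by (simp add: smax_weights_def V_def L_def)
  qed
qed

lemma uhat_has_derivative_convex_combination:
  fixes u :: "nat \<Rightarrow> 'a::real_normed_vector \<Rightarrow> real" and D :: "nat \<Rightarrow> 'a \<Rightarrow> real"
  assumes u_deriv: "\<And>m. m \<le> k \<Longrightarrow> (u m has_derivative D m) (at x)"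
    and \<gamma>: "0 < \<gamma>" "\<gamma> \<le> 1" and l0: "0 < l0"
  shows "\<exists>a :: nat \<Rightarrow> real.
           (\<forall>i\<le>k. a i \<ge> 0) \<and> (\<Sum>i\<le>k. a i) = 1 \<and>
           (uhat u \<eta> \<gamma> l0 k has_derivative (\<lambda>h. \<Sum>i\<le>k. a i * D i h)) (at x) \<and>
           (\<forall>i\<le>k. u i x < uhat u \<eta> \<gamma> l0 k x - 2 * real k / lam \<gamma> l0 i \<longrightarrow> a i = 0)"
  using u_deriv
proof (induction k)
  case 0
  then show ?case by (intro exI[of _ "\<lambda>_. 1"]) auto
next
  case (Suc k)
  then obtain a where a_nonneg: "\<forall>i\<le>k. a i \<ge> 0" and a_sum: "(\<Sum>i\<le>k. a i) = 1"
    and V_deriv: "(uhat u \<eta> \<gamma> l0 k has_derivative (\<lambda>h. \<Sum>i\<le>k. a i * D i h)) (at x)"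
    and a_zero: "\<forall>i\<le>k. u i x < uhat u \<eta> \<gamma> l0 k x - 2 * real k / lam \<gamma> l0 i \<longrightarrow> a i = 0"
    by auto
  define L where "L = lam \<gamma> l0 (Suc k)"
  define s where "s = deriv \<eta> (L * (uhat u \<eta> \<gamma> l0 k x - u (Suc k) x))"
  have "0 < L"
    unfolding L_def using \<gamma>(1) l0 by (rule lam_pos)
  then have "(uhat u \<eta> \<gamma> l0 (Suc k) has_derivative
          (\<lambda>h. (1 + s) / 2 * (\<Sum>i\<le>k. a i * D i h) + (1 - s) / 2 * D (Suc k) h)) (at x)"
    unfolding uhat_Suc_smax L_def[symmetric] s_def using V_deriv Suc.prems
    by (intro has_derivative_smax) auto
  then have "(uhat u \<eta> \<gamma> l0 (Suc k) has_derivative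
               (\<lambda>h. \<Sum>i\<le>Suc k. smax_weights s k a i * D i h)) (at x)"
    by (simp only: sum_smax_weights_mult)
  moreover have "\<bar>s\<bar> \<le> 1"
    unfolding s_def by (rule abs_deriv_le_1)
  moreover have "u i x < uhat u \<eta> \<gamma> l0 (Suc k) x - 2 * real (Suc k) / lam \<gamma> l0 i
                   \<Longrightarrow> smax_weights s k a i = 0" if "i \<le> Suc k" for i
    unfolding s_def L_def using \<gamma> l0 a_zero that by (rule uhat_Suc_weight_eq_0)
  ultimately show ?case
    using smax_weights_nonneg[OF _ a_nonneg] sum_smax_weights[OF a_sum]
    by (intro exI[of _ "smax_weights s k a"]) blast
qed

end

theorem lemma2p9:
  fixes u :: "nat \<Rightarrow> real ^ 'n \<Rightarrow> real"
    and c :: "nat \<Rightarrow> real ^ 'n" and b :: "nat \<Rightarrow> real"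
    and q k :: nat and \<eta> :: "real \<Rightarrow> real" and \<gamma> l0 :: real
    and \<Omega> :: "(real ^ 'n) set" and x :: "real ^ 'n"
  assumes dim: "CARD('n) \<ge> 3"
    and affine_u: "\<And>m. m \<le> q \<Longrightarrow> u m = (\<lambda>y. c m \<bullet> y + b m)"
    and nonconst: "\<And>m. m \<le> q \<Longrightarrow> c m \<noteq> 0"
    and Omega_def: "\<Omega> = {y. \<forall>m\<le>q. u m y \<le> 0}"
    and Omega_compact: "compact \<Omega>"
    and Omega_int: "interior \<Omega> \<noteq> {}"
    and eta_smooth: "smooth_fun \<eta>"
    and eta_even: "\<And>t. \<eta> (- t) = \<eta> t"
    and eta_abs: "\<And>t. \<bar>t\<bar> \<ge> 1/2 \<Longrightarrow> \<eta> t = \<bar>t\<bar>"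
    and eta_convex: "\<And>t. (deriv ^^ 2) \<eta> t \<ge> 0"
    and gamma: "0 < \<gamma>" "\<gamma> < 1/2"
    and lambda0: "l0 > 1"
    and k: "k \<le> q"
    and x: "x \<in> \<Omega>"
  shows "\<exists>a :: nat \<Rightarrow> real.
           (\<forall>i\<le>k. a i \<ge> 0) \<and> (\<Sum>i\<le>k. a i) = 1 \<and>
           (uhat u \<eta> \<gamma> l0 k has_derivative (\<lambda>h. \<Sum>i\<le>k. a i * (c i \<bullet> h))) (at x) \<and>
           (\<forall>i\<le>k. u i x < uhat u \<eta> \<gamma> l0 k x - 2 * real k / lam \<gamma> l0 i \<longrightarrow> a i = 0)"
proof -
  interpret smoothed_abs \<eta>
    using eta_smooth eta_abs eta_convex by (rule smoothed_absI)
  have "(u m has_derivative (\<lambda>h. c m \<bullet> h)) (at x)" if "m \<le> k" for m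
    using affine_u[of m] that k by (auto intro!: derivative_eq_intros)
  then show ?thesis
    using gamma lambda0 by (intro uhat_has_derivative_convex_combination) auto
qed

end
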